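(* Let $n\ge1$. There is a $\Pi^0_n$ equivalence relation on $\mathbb{N}^\mathbb{N}$, all of whose classes are countably infinite, which is not $\Sigma^0_n$-graphable.
   Context: $E$ is $\Gamma$-graphable if there is a simple undirected graph $G$ in $\Gamma$ whose connectedness relation (connected by a finite path) equals $E$. Pointclasses are lightface. *)

theory Defs
  imports Main "HOL-Library.Countable_Set" "HOL-Library.Nat_Bijection"
begin

type_synonym baire = "nat \<Rightarrow> nat"

definition nth0 :: "nat list \<Rightarrow> nat \<Rightarrow> nat" where
  "nth0 xs i = (if i < length xs then xs ! i else 0)"

(* primitive recursive functions (arguments given as a list; missing arguments read as 0) *)
inductive primrec_fn :: "(nat list \<Rightarrow> nat) \<Rightarrow> bool" where
  zero: "primrec_fn (\<lambda>_. 0)"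
| succ: "primrec_fn (\<lambda>xs. Suc (nth0 xs 0))"
| proj: "primrec_fn (\<lambda>xs. nth0 xs i)"
| comp: "primrec_fn f \<Longrightarrow> (\<And>g. g \<in> set gs \<Longrightarrow> primrec_fn g)
         \<Longrightarrow> primrec_fn (\<lambda>xs. f (map (\<lambda>g. g xs) gs))"
| prec: "primrec_fn f \<Longrightarrow> primrec_fn g
         \<Longrightarrow> primrec_fn (\<lambda>xs. rec_nat (f (tl xs)) (\<lambda>n r. g (n # r # tl xs)) (nth0 xs 0))"

definition Sigma01 :: "baire set \<Rightarrow> bool" where
  "Sigma01 A \<longleftrightarrow> (\<exists>f. primrec_fn f \<and>
      A = {x. \<exists>k. f [list_encode (map x [0..<k])] \<noteq> 0})"

(* m prepended to x: codes the pair (m, x) in N x N^N *)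
definition ncons :: "nat \<Rightarrow> baire \<Rightarrow> baire" where
  "ncons m x = (\<lambda>i. case i of 0 \<Rightarrow> m | Suc j \<Rightarrow> x j)"

(* lightface Sigma^0_n / Pi^0_n for n \<ge> 1 (index 0 is a dummy equal to level 1) *)
fun Sigma0 :: "nat \<Rightarrow> baire set \<Rightarrow> bool"
and Pi0 :: "nat \<Rightarrow> baire set \<Rightarrow> bool" where
  "Sigma0 0 A = Sigma01 A"
| "Sigma0 (Suc 0) A = Sigma01 A"
| "Sigma0 (Suc (Suc n)) A = (\<exists>B. Pi0 (Suc n) B \<and> A = {x. \<exists>m. ncons m x \<in> B})"
| "Pi0 n A = Sigma0 n (- A)"

definition bfst :: "baire \<Rightarrow> baire" where "bfst z = (\<lambda>i. z (2 * i))"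
definition bsnd :: "baire \<Rightarrow> baire" where "bsnd z = (\<lambda>i. z (2 * i + 1))"

definition rel_code :: "(baire \<times> baire) set \<Rightarrow> baire set" where
  "rel_code R = {z. (bfst z, bsnd z) \<in> R}"

definition Sigma0_rel :: "nat \<Rightarrow> (baire \<times> baire) set \<Rightarrow> bool" where
  "Sigma0_rel n R = Sigma0 n (rel_code R)"

definition Pi0_rel :: "nat \<Rightarrow> (baire \<times> baire) set \<Rightarrow> bool" where
  "Pi0_rel n R = Pi0 n (rel_code R)"

(* E is Sigma^0_n-graphable: some simple undirected graph G in Sigma^0_n has
   connectedness relation (finite paths, i.e. reflexive-transitive closure) equal to E *)
definition Sigma0_graphable :: "nat \<Rightarrow> (baire \<times> baire) set \<Rightarrow> bool" where
  "Sigma0_graphable n E \<longleftrightarrow> (\<exists>G. sym G \<and> irrefl G \<and> Sigma0_rel n G \<and> G\<^sup>* = E)"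

end

theory Submission
  imports Defs
begin

text \<open>Fix a set \<open>P\<close> that is \<open>\<Pi>\<^sup>0\<^sub>n\<close> but not \<open>\<Sigma>\<^sup>0\<^sub>n\<close>, obtained by diagonalising against a universal
  \<open>\<Sigma>\<^sup>0\<^sub>n\<close> set. Writing points of Baire space as \<open>m\<^sup>\<frown>t\<close>, let \<open>m\<^sup>\<frown>t E m'\<^sup>\<frown>t'\<close> iff \<open>t = t'\<close> and either
  \<open>t \<in> P\<close> or \<open>m, m'\<close> have the same parity. This is \<open>\<Pi>\<^sup>0\<^sub>n\<close>, and the classes over a tail \<open>t\<close> are
  countably infinite: one class if \<open>t \<in> P\<close>, two (even and odd heads) otherwise. If a \<open>\<Sigma>\<^sup>0\<^sub>n\<close> graph
  \<open>G\<close> had connectedness relation \<open>E\<close>, then \<open>t \<in> P\<close> iff some \<open>G\<close>-edge joins \<open>m\<^sup>\<frown>t\<close> and \<open>m'\<^sup>\<frown>t\<close>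
  with \<open>m, m'\<close> of different parity, since a path from \<open>0\<^sup>\<frown>t\<close> to \<open>1\<^sup>\<frown>t\<close> must cross the parity
  boundary. That would make \<open>P\<close> a \<open>\<Sigma>\<^sup>0\<^sub>n\<close> set.\<close>

section \<open>Primitive recursive functions\<close>

lemma nth0_Nil [simp]: "nth0 [] i = 0"
  by (simp add: nth0_def)

lemma nth0_Cons_0 [simp]: "nth0 (x # xs) 0 = x"
  by (simp add: nth0_def)

lemma nth0_Cons_Suc [simp]: "nth0 (x # xs) (Suc i) = nth0 xs i"
  by (simp add: nth0_def)

lemma nth0_tl [simp]: "nth0 (tl xs) i = nth0 xs (Suc i)"
  by (cases xs) (auto simp: nth0_def)

lemma nth0_drop [simp]: "nth0 (drop k xs) i = nth0 xs (i + k)"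
  by (cases "i + k < length xs") (auto simp: nth0_def add.commute)

lemma nth0_map_upt [simp]: "i < N \<Longrightarrow> nth0 (map f [0..<N]) i = f i"
  by (simp add: nth0_def)

text \<open>A primitive recursive function reads only finitely many arguments, so applying it to a
  reindexed argument list is a composition with projections.\<close>

definition depends_on_first :: "(nat list \<Rightarrow> nat) \<Rightarrow> nat \<Rightarrow> bool" where
  "depends_on_first g N \<longleftrightarrow> (\<forall>xs ys. (\<forall>i<N. nth0 xs i = nth0 ys i) \<longrightarrow> g xs = g ys)"

lemma depends_on_first_mono: "depends_on_first g N \<Longrightarrow> N \<le> M \<Longrightarrow> depends_on_first g M"
  unfolding depends_on_first_def by (meson less_le_trans)

lemma depends_on_first_list:
  "(\<And>g. g \<in> set gs \<Longrightarrow> \<exists>N. depends_on_first g N) \<Longrightarrow> \<exists>N. \<forall>g\<in>set gs. depends_on_first g N"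
proof (induction gs)
  case (Cons a gs)
  then obtain N1 where "\<forall>g\<in>set gs. depends_on_first g N1"
    by auto
  moreover obtain N2 where "depends_on_first a N2"
    using Cons.prems by auto
  ultimately show ?case
    by (metis max.cobounded1 max.cobounded2 set_ConsD depends_on_first_mono)
qed simp

lemma primrec_fn_depends_on_first: "primrec_fn g \<Longrightarrow> \<exists>N. depends_on_first g N"
proof (induction rule: primrec_fn.induct)
  case zero
  then show ?case by (auto simp: depends_on_first_def)
next
  case succ
  show ?case by (rule exI[of _ 1]) (auto simp: depends_on_first_def)
next
  case (proj i)
  show ?case by (rule exI[of _ "Suc i"]) (auto simp: depends_on_first_def)
next
  case (comp f gs)
  then obtain N where N: "\<forall>g\<in>set gs. depends_on_first g N"
    using depends_on_first_list[of gs] by blast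
  have "map (\<lambda>g. g xs) gs = map (\<lambda>g. g ys) gs" if "\<forall>i<N. nth0 xs i = nth0 ys i" for xs ys
    using N that unfolding depends_on_first_def by auto
  then show ?case
    unfolding depends_on_first_def by metis
next
  case (prec f g)
  then obtain N1 N2 where N1: "depends_on_first f N1" and N2: "depends_on_first g N2"
    by blast
  have "rec_nat (f (tl xs)) (\<lambda>n r. g (n # r # tl xs)) (nth0 xs 0) =
        rec_nat (f (tl ys)) (\<lambda>n r. g (n # r # tl ys)) (nth0 ys 0)"
    if agree: "\<forall>i<Suc (N1 + N2). nth0 xs i = nth0 ys i" for xs ys
  proof -
    have "f (tl xs) = f (tl ys)"
      using N1 agree unfolding depends_on_first_def by auto
    moreover have "g (n # r # tl xs) = g (n # r # tl ys)" for n r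
    proof -
      have "nth0 (n # r # tl xs) i = nth0 (n # r # tl ys) i" if "i < N2" for i
        using agree that by (cases i; cases "i - 1") auto
      then show ?thesis
        using N2 unfolding depends_on_first_def by blast
    qed
    moreover have "nth0 xs 0 = nth0 ys 0"
      using agree by auto
    ultimately show ?thesis
      by simp
  qed
  then show ?case
    unfolding depends_on_first_def by blast
qed

lemma primrec_fn_reindex:
  assumes "primrec_fn g" "\<And>ys i. nth0 (R ys) i = nth0 ys (\<sigma> i)"
  shows "primrec_fn (\<lambda>ys. g (R ys))"
proof -
  obtain N where N: "depends_on_first g N"
    using primrec_fn_depends_on_first assms(1) by blast
  have eq: "g (R ys) = g (map (\<lambda>i. nth0 ys (\<sigma> i)) [0..<N])" for ys
    using N assms(2) unfolding depends_on_first_def by auto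
  have "primrec_fn (\<lambda>ys. g (map (\<lambda>h. h ys) (map (\<lambda>i ys. nth0 ys (\<sigma> i)) [0..<N])))"
    by (rule primrec_fn.comp[OF assms(1)]) (auto intro: primrec_fn.proj)
  then show ?thesis
    by (simp add: eq o_def)
qed

lemma primrec_fn_reindex_Cons:
  assumes "primrec_fn g" "primrec_fn e" "\<And>ys i. nth0 (R ys) i = nth0 ys (\<sigma> i)"
  shows "primrec_fn (\<lambda>ys. g (e ys # R ys))"
proof -
  obtain N where N: "depends_on_first g N"
    using primrec_fn_depends_on_first assms(1) by blast
  have "nth0 (e ys # R ys) i = nth0 (e ys # map (\<lambda>i. nth0 ys (\<sigma> i)) [0..<N]) i"
    if "i < N" for ys i
    using that assms(3) by (cases i) auto
  then have eq: "g (e ys # R ys) = g (e ys # map (\<lambda>i. nth0 ys (\<sigma> i)) [0..<N])" for ys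
    using N unfolding depends_on_first_def by blast
  have "primrec_fn (\<lambda>ys. g (map (\<lambda>h. h ys) (e # map (\<lambda>i ys. nth0 ys (\<sigma> i)) [0..<N])))"
    by (rule primrec_fn.comp[OF assms(1)]) (auto intro: primrec_fn.proj assms(2))
  then show ?thesis
    by (simp add: eq o_def)
qed

lemma primrec_fn_drop: "primrec_fn a \<Longrightarrow> primrec_fn (\<lambda>ys. a (drop k ys))"
  by (rule primrec_fn_reindex[of a _ "\<lambda>i. i + k"]) simp_all

lemma primrec_fn_nth0_tl: "primrec_fn (\<lambda>ys. nth0 (tl ys) i)"
  by (simp only: nth0_tl) (rule primrec_fn.proj)

lemma primrec_fn_comp1:
  assumes "primrec_fn (\<lambda>ys. F (nth0 ys 0))" "primrec_fn e"
  shows "primrec_fn (\<lambda>xs. F (e xs))"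
  using primrec_fn.comp[OF assms(1), of "[e]"] assms(2) by simp

lemma primrec_fn_comp2:
  assumes "primrec_fn (\<lambda>ys. F (nth0 ys 0) (nth0 ys 1))" "primrec_fn e1" "primrec_fn e2"
  shows "primrec_fn (\<lambda>xs. F (e1 xs) (e2 xs))"
  using primrec_fn.comp[OF assms(1), of "[e1, e2]"] assms(2,3) by auto

lemma primrec_fn_comp3:
  assumes "primrec_fn (\<lambda>ys. F (nth0 ys 0) (nth0 ys 1) (nth0 ys 2))"
    and "primrec_fn e1" "primrec_fn e2" "primrec_fn e3"
  shows "primrec_fn (\<lambda>xs. F (e1 xs) (e2 xs) (e3 xs))"
  using primrec_fn.comp[OF assms(1), of "[e1, e2, e3]"] assms(2-4) by (auto simp: numeral_eq_Suc)

lemma primrec_fn_app_singleton: "primrec_fn f \<Longrightarrow> primrec_fn e \<Longrightarrow> primrec_fn (\<lambda>xs. f [e xs])"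
  using primrec_fn.comp[of f "[e]"] by auto

lemma primrec_fn_Suc: "primrec_fn e \<Longrightarrow> primrec_fn (\<lambda>xs. Suc (e xs))"
  using primrec_fn_comp1[OF primrec_fn.succ] .

lemma primrec_fn_const: "primrec_fn (\<lambda>xs. c)"
  by (induction c) (use primrec_fn.zero primrec_fn_Suc in auto)

lemma primrec_fn_rec_nat:
  assumes "primrec_fn k" "primrec_fn A"
    and "primrec_fn (\<lambda>ys. B (nth0 ys 0) (nth0 ys 1) (drop 2 ys))"
  shows "primrec_fn (\<lambda>xs. rec_nat (A xs) (\<lambda>n r. B n r xs) (k xs))"
proof -
  have "primrec_fn (\<lambda>zs. rec_nat (A (tl zs))
          (\<lambda>n r. (\<lambda>ys. B (nth0 ys 0) (nth0 ys 1) (drop 2 ys)) (n # r # tl zs)) (nth0 zs 0))"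
    by (rule primrec_fn.prec[OF assms(2,3)])
  then have "primrec_fn (\<lambda>zs. rec_nat (A (tl zs)) (\<lambda>n r. B n r (tl zs)) (nth0 zs 0))"
    by simp
  from primrec_fn_reindex_Cons[OF this assms(1), of "\<lambda>ys. ys" "\<lambda>i. i"] show ?thesis
    by simp
qed

lemma primrec_fn_add:
  assumes "primrec_fn a" "primrec_fn b"
  shows "primrec_fn (\<lambda>xs. a xs + b xs)"
proof -
  have "rec_nat (a xs) (\<lambda>_ r. Suc r) m = a xs + m" for xs m
    by (induct m) auto
  moreover have "primrec_fn (\<lambda>xs. rec_nat (a xs) (\<lambda>_ r. Suc r) (b xs))"
    by (rule primrec_fn_rec_nat[OF assms(2,1)]) (intro primrec_fn_Suc primrec_fn.proj)
  ultimately show ?thesis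
    by simp
qed

lemma primrec_fn_pred: "primrec_fn a \<Longrightarrow> primrec_fn (\<lambda>xs. a xs - 1)"
proof -
  have "rec_nat 0 (\<lambda>n _. n) m = m - 1" for m
    by (induct m) auto
  moreover assume "primrec_fn a"
  then have "primrec_fn (\<lambda>xs. rec_nat 0 (\<lambda>n _. n) (a xs))"
    by (rule primrec_fn_rec_nat[OF _ primrec_fn_const]) (rule primrec_fn.proj)
  ultimately show ?thesis
    by simp
qed

lemma primrec_fn_diff:
  assumes "primrec_fn a" "primrec_fn b"
  shows "primrec_fn (\<lambda>xs. a xs - b xs)"
proof -
  have "rec_nat (a xs) (\<lambda>_ r. r - 1) m = a xs - m" for xs m
    by (induct m) auto
  moreover have "primrec_fn (\<lambda>xs. rec_nat (a xs) (\<lambda>_ r. r - 1) (b xs))"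
    by (rule primrec_fn_rec_nat[OF assms(2,1)]) (intro primrec_fn_pred primrec_fn.proj)
  ultimately show ?thesis
    by simp
qed

lemma primrec_fn_mult:
  assumes "primrec_fn a" "primrec_fn b"
  shows "primrec_fn (\<lambda>xs. a xs * b xs)"
proof -
  have "rec_nat 0 (\<lambda>_ r. r + a xs) m = a xs * m" for xs m
    by (induct m) auto
  moreover have "primrec_fn (\<lambda>xs. rec_nat 0 (\<lambda>_ r. r + a xs) (b xs))"
    by (rule primrec_fn_rec_nat[OF assms(2) primrec_fn_const])
      (intro primrec_fn_add primrec_fn.proj primrec_fn_drop assms(1))
  ultimately show ?thesis
    by simp
qed

lemma primrec_fn_if_zero:
  assumes "primrec_fn c" "primrec_fn a" "primrec_fn b"
  shows "primrec_fn (\<lambda>xs. if c xs = 0 then a xs else b xs)"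
proof -
  have "rec_nat (a xs) (\<lambda>_ _. b xs) m = (if m = 0 then a xs else b xs)" for xs m
    by (cases m) auto
  moreover have "primrec_fn (\<lambda>xs. rec_nat (a xs) (\<lambda>_ _. b xs) (c xs))"
    by (rule primrec_fn_rec_nat[OF assms(1,2)]) (intro primrec_fn_drop assms(3))
  ultimately show ?thesis
    by simp
qed

definition primrec_pred :: "(nat list \<Rightarrow> bool) \<Rightarrow> bool" where
  "primrec_pred P \<longleftrightarrow> primrec_fn (\<lambda>xs. if P xs then 1 else 0)"

lemma primrec_fn_if:
  assumes "primrec_pred P" "primrec_fn a" "primrec_fn b"
  shows "primrec_fn (\<lambda>xs. if P xs then a xs else b xs)"
proof -
  have "primrec_fn (\<lambda>xs. if (if P xs then 1 else 0) = (0::nat) then b xs else a xs)"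
    using assms unfolding primrec_pred_def by (intro primrec_fn_if_zero)
  moreover have "(\<lambda>xs. if (if P xs then 1 else 0) = (0::nat) then b xs else a xs) =
      (\<lambda>xs. if P xs then a xs else b xs)"
    by auto
  ultimately show ?thesis
    by simp
qed

lemma primrec_predI_zero:
  assumes "primrec_fn c" "\<And>xs. P xs \<longleftrightarrow> c xs = 0"
  shows "primrec_pred P"
proof -
  have "primrec_fn (\<lambda>xs. if c xs = 0 then 1 else 0)"
    by (intro primrec_fn_if_zero assms(1) primrec_fn_const)
  then show ?thesis
    unfolding primrec_pred_def using assms(2) by simp
qed

lemma primrec_pred_eq: "primrec_fn a \<Longrightarrow> primrec_fn b \<Longrightarrow> primrec_pred (\<lambda>xs. a xs = b xs)"
  by (rule primrec_predI_zero[of "\<lambda>xs. (a xs - b xs) + (b xs - a xs)"])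
    (auto intro: primrec_fn_add primrec_fn_diff)

lemma primrec_pred_le: "primrec_fn a \<Longrightarrow> primrec_fn b \<Longrightarrow> primrec_pred (\<lambda>xs. a xs \<le> b xs)"
  by (rule primrec_predI_zero[of "\<lambda>xs. a xs - b xs"]) (auto intro: primrec_fn_diff)

lemma primrec_pred_less: "primrec_fn a \<Longrightarrow> primrec_fn b \<Longrightarrow> primrec_pred (\<lambda>xs. a xs < b xs)"
  by (rule primrec_predI_zero[of "\<lambda>xs. Suc (a xs) - b xs"]) (auto intro: primrec_fn_diff primrec_fn_Suc)

lemma primrec_pred_not: "primrec_pred P \<Longrightarrow> primrec_pred (\<lambda>xs. \<not> P xs)"
  unfolding primrec_pred_def[of P] by (rule primrec_predI_zero) auto

lemma primrec_pred_conj: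
  assumes "primrec_pred P" "primrec_pred Q"
  shows "primrec_pred (\<lambda>xs. P xs \<and> Q xs)"
  using assms unfolding primrec_pred_def[of P] primrec_pred_def[of Q]
  by (intro primrec_predI_zero[of "\<lambda>xs. (1 - (if P xs then 1 else 0)) + (1 - (if Q xs then 1 else 0))"]
      primrec_fn_add primrec_fn_diff primrec_fn_const) auto

lemma primrec_pred_disj:
  assumes "primrec_pred P" "primrec_pred Q"
  shows "primrec_pred (\<lambda>xs. P xs \<or> Q xs)"
  using assms unfolding primrec_pred_def[of P] primrec_pred_def[of Q]
  by (intro primrec_predI_zero[of "\<lambda>xs. (1 - (if P xs then 1 else 0)) * (1 - (if Q xs then 1 else 0))"]
      primrec_fn_mult primrec_fn_diff primrec_fn_const) auto

lemma primrec_pred_iff: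
  assumes "primrec_pred P" "primrec_pred Q"
  shows "primrec_pred (\<lambda>xs. P xs \<longleftrightarrow> Q xs)"
proof -
  have "primrec_pred (\<lambda>xs. (P xs \<and> Q xs) \<or> (\<not> P xs \<and> \<not> Q xs))"
    by (intro primrec_pred_disj primrec_pred_conj primrec_pred_not assms)
  moreover have "(\<lambda>xs. (P xs \<and> Q xs) \<or> (\<not> P xs \<and> \<not> Q xs)) = (\<lambda>xs. P xs \<longleftrightarrow> Q xs)"
    by auto
  ultimately show ?thesis
    by simp
qed

lemma primrec_pred_comp3:
  assumes "primrec_pred (\<lambda>ys. R (nth0 ys 0) (nth0 ys 1) (nth0 ys 2))"
    and "primrec_fn e1" "primrec_fn e2" "primrec_fn e3"
  shows "primrec_pred (\<lambda>xs. R (e1 xs) (e2 xs) (e3 xs))"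
  using primrec_fn_comp3[OF assms(1)[unfolded primrec_pred_def] assms(2-4)]
  by (simp add: primrec_pred_def)

lemma primrec_pred_drop_second:
  assumes "primrec_pred (\<lambda>ys. P (nth0 ys 0) (tl ys))"
  shows "primrec_pred (\<lambda>ys. P (nth0 ys 0) (drop 2 ys))"
  using primrec_fn_reindex_Cons[OF assms[unfolded primrec_pred_def] primrec_fn.proj, of _ "\<lambda>i. i + 2" 0]
  by (simp add: primrec_pred_def)

lemma primrec_pred_bex:
  assumes "primrec_fn k" "primrec_pred (\<lambda>ys. P (nth0 ys 0) (tl ys))"
  shows "primrec_pred (\<lambda>xs. \<exists>i<k xs. P i xs)"
proof -
  have "rec_nat 0 (\<lambda>n r. if P n xs then 1 else r) m = (if \<exists>i<m. P i xs then 1 else 0 :: nat)" for xs m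
    by (induct m) (auto simp: less_Suc_eq)
  moreover have "primrec_fn (\<lambda>xs. rec_nat 0 (\<lambda>n r. if P n xs then 1 else r) (k xs))"
    by (rule primrec_fn_rec_nat[OF assms(1) primrec_fn_const])
      (intro primrec_fn_if primrec_pred_drop_second assms(2) primrec_fn_const primrec_fn.proj)
  ultimately show ?thesis
    unfolding primrec_pred_def by simp
qed

lemma primrec_fn_unique_witness:
  assumes "primrec_fn k" "primrec_pred (\<lambda>ys. P (nth0 ys 0) (tl ys))"
    and "\<And>xs j. P j xs \<longleftrightarrow> j = w xs" "\<And>xs. w xs < k xs"
  shows "primrec_fn w"
proof -
  have "rec_nat 0 (\<lambda>n r. if P n xs then n else r) m = (if w xs < m then w xs else 0)" for xs m
    using assms(3) by (induct m) auto
  moreover have "primrec_fn (\<lambda>xs. rec_nat 0 (\<lambda>n r. if P n xs then n else r) (k xs))"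
    by (rule primrec_fn_rec_nat[OF assms(1) primrec_fn_const])
      (intro primrec_fn_if primrec_pred_drop_second assms(2) primrec_fn.proj)
  ultimately show ?thesis
    using assms(4) by simp
qed


lemma primrec_fn_div2: "primrec_fn e \<Longrightarrow> primrec_fn (\<lambda>xs. e xs div 2)"
proof -
  have "primrec_fn (\<lambda>ys. nth0 ys 0 div 2)"
  proof (rule primrec_fn_unique_witness[where P = "\<lambda>q ys. 2 * q = nth0 ys 0 \<or> Suc (2 * q) = nth0 ys 0"])
    show "primrec_fn (\<lambda>ys. Suc (nth0 ys 0))"
      by (intro primrec_fn_Suc primrec_fn.proj)
    show "primrec_pred (\<lambda>ys. 2 * nth0 ys 0 = nth0 (tl ys) 0 \<or> Suc (2 * nth0 ys 0) = nth0 (tl ys) 0)"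
      by (intro primrec_pred_disj primrec_pred_eq primrec_fn_mult primrec_fn_Suc primrec_fn_const
          primrec_fn.proj primrec_fn_nth0_tl)
    show "(2 * j = nth0 xs 0 \<or> Suc (2 * j) = nth0 xs 0) \<longleftrightarrow> j = nth0 xs 0 div 2" for xs j
      by presburger
  qed simp
  then show "primrec_fn e \<Longrightarrow> ?thesis"
    by (rule primrec_fn_comp1)
qed

lemma primrec_pred_even: "primrec_fn e \<Longrightarrow> primrec_pred (\<lambda>xs. even (e xs))"
proof -
  assume "primrec_fn e"
  then have "primrec_pred (\<lambda>xs. e xs = 2 * (e xs div 2))"
    by (intro primrec_pred_eq primrec_fn_mult primrec_fn_const primrec_fn_div2)
  moreover have "(\<lambda>xs. e xs = 2 * (e xs div 2)) = (\<lambda>xs. even (e xs))"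
    by (rule ext) presburger
  ultimately show ?thesis
    by simp
qed

lemma primrec_fn_min: "primrec_fn a \<Longrightarrow> primrec_fn b \<Longrightarrow> primrec_fn (\<lambda>xs. min (a xs) (b xs))"
  unfolding min_def by (intro primrec_fn_if primrec_pred_le)

lemmas primrec_intros = primrec_fn_const primrec_fn.proj primrec_fn_nth0_tl primrec_fn_Suc
  primrec_fn_add primrec_fn_diff primrec_fn_mult primrec_fn_if primrec_pred_eq primrec_pred_less
  primrec_pred_le primrec_pred_not primrec_pred_conj primrec_pred_disj primrec_pred_bex

section \<open>Primitive recursive coding of pairs and lists\<close>

lemma primrec_fn_prod_encode:
  assumes "primrec_fn a" "primrec_fn b"
  shows "primrec_fn (\<lambda>xs. prod_encode (a xs, b xs))"
proof -
  have "rec_nat 0 (\<lambda>n r. r + Suc n) m = triangle m" for m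
    by (induct m) auto
  moreover have "primrec_fn (\<lambda>xs. rec_nat 0 (\<lambda>n r. r + Suc n) (a xs + b xs))"
    by (rule primrec_fn_rec_nat[OF primrec_fn_add[OF assms] primrec_fn_const]) (intro primrec_intros)
  ultimately show ?thesis
    unfolding prod_encode_def by (simp add: primrec_fn_add assms)
qed

lemma fst_prod_decode_less: "fst (prod_decode c) < Suc c"
  by (metis le_imp_less_Suc le_prod_encode_1 prod.collapse prod_decode_inverse)

lemma snd_prod_decode_less: "snd (prod_decode c) < Suc c"
  by (metis le_imp_less_Suc le_prod_encode_2 prod.collapse prod_decode_inverse)

lemma primrec_fn_fst_prod_decode: "primrec_fn e \<Longrightarrow> primrec_fn (\<lambda>xs. fst (prod_decode (e xs)))"
proof -
  have "primrec_fn (\<lambda>ys. fst (prod_decode (nth0 ys 0)))"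
  proof (rule primrec_fn_unique_witness[where k = "\<lambda>ys. Suc (nth0 ys 0)" and P = "\<lambda>m ys. \<exists>n<Suc (nth0 ys 0). prod_encode (m, n) = nth0 ys 0"])
    show "(\<exists>n<Suc (nth0 ys 0). prod_encode (m, n) = nth0 ys 0) \<longleftrightarrow> m = fst (prod_decode (nth0 ys 0))"
      for m ys
      by (metis fst_conv prod.collapse prod_decode_inverse prod_encode_inverse snd_prod_decode_less)
  qed (intro primrec_intros primrec_fn_prod_encode fst_prod_decode_less | simp only: nth0_tl)+
  then show "primrec_fn e \<Longrightarrow> ?thesis"
    by (rule primrec_fn_comp1)
qed

lemma primrec_fn_snd_prod_decode: "primrec_fn e \<Longrightarrow> primrec_fn (\<lambda>xs. snd (prod_decode (e xs)))"
proof -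
  have "primrec_fn (\<lambda>ys. snd (prod_decode (nth0 ys 0)))"
  proof (rule primrec_fn_unique_witness[where k = "\<lambda>ys. Suc (nth0 ys 0)" and P = "\<lambda>n ys. \<exists>m<Suc (nth0 ys 0). prod_encode (m, n) = nth0 ys 0"])
    show "(\<exists>m<Suc (nth0 ys 0). prod_encode (m, n) = nth0 ys 0) \<longleftrightarrow> n = snd (prod_decode (nth0 ys 0))"
      for n ys
      by (metis snd_conv prod.collapse prod_decode_inverse prod_encode_inverse fst_prod_decode_less)
  qed (intro primrec_intros primrec_fn_prod_encode snd_prod_decode_less | simp only: nth0_tl)+
  then show "primrec_fn e \<Longrightarrow> ?thesis"
    by (rule primrec_fn_comp1)
qed

definition code_tl :: "nat \<Rightarrow> nat" where
  "code_tl c = list_encode (tl (list_decode c))"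

definition code_nth :: "nat \<Rightarrow> nat \<Rightarrow> nat" where
  "code_nth i c = nth0 (list_decode c) i"

definition code_length :: "nat \<Rightarrow> nat" where
  "code_length c = length (list_decode c)"

definition code_take :: "nat \<Rightarrow> nat \<Rightarrow> nat" where
  "code_take i c = list_encode (take i (list_decode c))"

lemma prod_decode_0: "prod_decode 0 = (0, 0)"
  using prod_encode_inverse[of "(0, 0)"] by (simp add: prod_encode_def)

lemma code_tl_eq: "code_tl c = snd (prod_decode (c - 1))"
  by (cases c) (auto simp: code_tl_def prod_decode_0 split: prod.split)

lemma funpow_code_tl: "(code_tl ^^ i) c = list_encode (drop i (list_decode c))"
  by (induct i) (auto simp: code_tl_def drop_Suc tl_drop)

lemma code_nth_eq: "code_nth i c = fst (prod_decode ((code_tl ^^ i) c - 1))"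
proof -
  have "code_nth 0 d = fst (prod_decode (d - 1))" for d
    by (cases d) (auto simp: code_nth_def prod_decode_0 split: prod.split)
  moreover have "code_nth i c = code_nth 0 ((code_tl ^^ i) c)"
    by (simp add: code_nth_def funpow_code_tl nth0_def)
  ultimately show ?thesis
    by simp
qed

lemma primrec_fn_code_tl_iterate:
  assumes "primrec_fn a" "primrec_fn b"
  shows "primrec_fn (\<lambda>xs. (code_tl ^^ a xs) (b xs))"
proof -
  have "rec_nat c (\<lambda>_ r. code_tl r) m = (code_tl ^^ m) c" for c m
    by (induct m) auto
  moreover have "primrec_fn (\<lambda>xs. rec_nat (b xs) (\<lambda>_ r. code_tl r) (a xs))"
    by (rule primrec_fn_rec_nat[OF assms]) (simp add: code_tl_eq primrec_fn_snd_prod_decode primrec_intros)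
  ultimately show ?thesis
    by simp
qed

lemma primrec_fn_code_nth:
  "primrec_fn a \<Longrightarrow> primrec_fn b \<Longrightarrow> primrec_fn (\<lambda>xs. code_nth (a xs) (b xs))"
  unfolding code_nth_eq
  by (intro primrec_fn_fst_prod_decode primrec_fn_diff primrec_fn_code_tl_iterate primrec_fn_const)

lemma length_le_list_encode: "length xs \<le> list_encode xs"
  by (induction xs) (use le_prod_encode_2 in \<open>auto intro: le_trans\<close>)

lemma primrec_fn_code_length: "primrec_fn e \<Longrightarrow> primrec_fn (\<lambda>xs. code_length (e xs))"
proof -
  have tl_0: "(code_tl ^^ i) c = 0 \<longleftrightarrow> code_length c \<le> i" for i c
    using list_encode_eq[of "drop i (list_decode c)" "[]"] by (simp add: funpow_code_tl code_length_def)
  have "rec_nat 0 (\<lambda>i r. if (code_tl ^^ i) c = 0 then r else Suc r) m = min m (code_length c)" for c m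
    by (induct m) (auto simp: tl_0)
  moreover have "code_length c \<le> c" for c
    using length_le_list_encode[of "list_decode c"] by (simp add: code_length_def)
  moreover have "primrec_fn (\<lambda>ys. rec_nat 0 (\<lambda>i r. if (code_tl ^^ i) (nth0 ys 0) = 0 then r else Suc r) (nth0 ys 0))"
    by (rule primrec_fn_rec_nat[OF primrec_fn.proj primrec_fn_const])
      (intro primrec_intros primrec_fn_code_tl_iterate | simp only: nth0_drop)+
  ultimately have "primrec_fn (\<lambda>ys. code_length (nth0 ys 0))"
    by (simp add: min_absorb2)
  then show "primrec_fn e \<Longrightarrow> ?thesis"
    by (rule primrec_fn_comp1)
qed

lemma primrec_fn_list_encode_map:
  assumes L: "primrec_fn L" and G: "primrec_fn (\<lambda>ys. G (nth0 ys 0) (tl ys))"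
  shows "primrec_fn (\<lambda>xs. list_encode (map (\<lambda>i. G i xs) [0..<L xs]))"
proof -
  have build: "rec_nat 0 (\<lambda>k r. Suc (prod_encode (g (N - Suc k), r))) k = list_encode (map g [N - k..<N])"
    if "k \<le> N" for g N k
    using that
  proof (induction k)
    case (Suc k)
    then have "[N - Suc k..<N] = (N - Suc k) # [N - k..<N]"
      by (metis Suc_diff_Suc Suc_le_lessD diff_less upt_conv_Cons zero_less_Suc less_le_trans)
    then show ?case
      using Suc by simp
  qed simp
  have e: "primrec_fn (\<lambda>ys. L (drop 2 ys) - Suc (nth0 ys 0))"
    by (intro primrec_fn_diff primrec_fn_drop L primrec_fn_Suc primrec_fn.proj)
  have "primrec_fn (\<lambda>ys. (\<lambda>ys. G (nth0 ys 0) (tl ys)) ((L (drop 2 ys) - Suc (nth0 ys 0)) # drop 2 ys))"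
    by (rule primrec_fn_reindex_Cons[OF G e, of _ "\<lambda>i. i + 2"]) simp
  then have "primrec_fn (\<lambda>ys. G (L (drop 2 ys) - Suc (nth0 ys 0)) (drop 2 ys))"
    by simp
  then have "primrec_fn (\<lambda>xs. rec_nat 0 (\<lambda>k r. Suc (prod_encode (G (L xs - Suc k) xs, r))) (L xs))"
    by (intro primrec_fn_rec_nat[OF L primrec_fn_const] primrec_fn_Suc primrec_fn_prod_encode primrec_fn.proj)
  moreover have "rec_nat 0 (\<lambda>k r. Suc (prod_encode (G (L xs - Suc k) xs, r))) (L xs) =
      list_encode (map (\<lambda>i. G i xs) [0..<L xs])" for xs
    using build[of "L xs" "L xs" "\<lambda>i. G i xs"] by simp
  ultimately show ?thesis
    by simp
qed

lemma primrec_fn_code_take: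
  assumes "primrec_fn a" "primrec_fn b"
  shows "primrec_fn (\<lambda>xs. code_take (a xs) (b xs))"
proof -
  have "take i l = map (nth0 l) [0..<min i (length l)]" for i l
    by (rule nth_equalityI) (auto simp: nth0_def)
  then have "code_take i c = list_encode (map (\<lambda>j. code_nth j c) [0..<min i (code_length c)])" for i c
    by (simp add: code_take_def code_nth_def code_length_def)
  moreover have "primrec_fn (\<lambda>xs. list_encode (map (\<lambda>j. code_nth j (b xs)) [0..<min (a xs) (code_length (b xs))]))"
    by (intro primrec_fn_list_encode_map primrec_fn_min assms primrec_fn_code_length primrec_fn_code_nth
        primrec_fn.proj primrec_fn_reindex[OF assms(2), of tl Suc]) simp
  ultimately show ?thesis
    by simp
qed

section \<open>Primitive recursive maps of Baire space\<close>

abbreviation prefix_code :: "baire \<Rightarrow> nat \<Rightarrow> nat" where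
  "prefix_code x k \<equiv> list_encode (map x [0..<k])"

lemma code_length_prefix_code [simp]: "code_length (prefix_code x k) = k"
  by (simp add: code_length_def)

lemma code_nth_prefix_code: "i < k \<Longrightarrow> code_nth i (prefix_code x k) = x i"
  by (simp add: code_nth_def)

lemma code_take_prefix_code [simp]: "code_take i (prefix_code x k) = prefix_code x (min i k)"
proof -
  have "take i [0..<k] = [0..<min i k]"
    by (rule nth_equalityI) auto
  then show ?thesis
    by (simp add: code_take_def take_map)
qed

lemma le_prefix_code: "k \<le> prefix_code x k"
  using length_le_list_encode[of "map x [0..<k]"] by simp

definition btl :: "baire \<Rightarrow> baire" where
  "btl x = (\<lambda>i. x (Suc i))"

definition bpair :: "baire \<Rightarrow> baire \<Rightarrow> baire" where
  "bpair a b = (\<lambda>i. if even i then a (i div 2) else b (i div 2))"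

lemma btl_ncons [simp]: "btl (ncons m x) = x"
  by (simp add: btl_def ncons_def)

lemma ncons_0 [simp]: "ncons m x 0 = m"
  by (simp add: ncons_def)

lemma ncons_Suc [simp]: "ncons m x (Suc i) = x i"
  by (simp add: ncons_def)

lemma ncons_btl [simp]: "ncons (x 0) (btl x) = x"
  by (rule ext) (simp add: ncons_def btl_def split: nat.splits)

lemma bfst_bpair [simp]: "bfst (bpair a b) = a"
  by (simp add: bfst_def bpair_def)

lemma bsnd_bpair [simp]: "bsnd (bpair a b) = b"
  by (simp add: bsnd_def bpair_def)

lemma prefix_code_ncons: "prefix_code (ncons m x) (Suc k) = Suc (prod_encode (m, prefix_code x k))"
proof -
  have "[0..<Suc k] = 0 # map Suc [0..<k]"
    by (simp add: map_Suc_upt upt_conv_Cons del: upt_Suc)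
  then show ?thesis
    by (simp add: comp_def del: upt_Suc)
qed

lemma code_tl_prefix_code: "code_tl (prefix_code w (Suc j)) = prefix_code (btl w) j"
  by (simp add: code_tl_def upt_conv_Cons map_Suc_upt[symmetric] btl_def comp_def del: upt_Suc)

lemma Sigma01I:
  assumes "primrec_pred (\<lambda>ys. Q (nth0 ys 0))" "A = {x. \<exists>k. Q (prefix_code x k)}"
  shows "Sigma01 A"
  unfolding Sigma01_def
proof (intro exI conjI)
  show "primrec_fn (\<lambda>ys. if Q (nth0 ys 0) then 1 else 0)"
    using assms(1) by (simp add: primrec_pred_def)
  show "A = {x. \<exists>k. (if Q (nth0 [prefix_code x k] 0) then 1 else 0) \<noteq> (0::nat)}"
    using assms(2) by simp
qed

lemma Sigma01E:
  assumes "Sigma01 A"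
  obtains f where "primrec_fn f" "A = {x. \<exists>k. f [prefix_code x k] \<noteq> 0}"
  using assms unfolding Sigma01_def by blast

text \<open>Primitive recursive functionals; the modulus \<open>L\<close> says how many output values an input
  prefix of a given length determines.\<close>

definition primrec_map :: "(baire \<Rightarrow> baire) \<Rightarrow> bool" where
  "primrec_map F \<longleftrightarrow> (\<exists>G L. primrec_fn (\<lambda>ys. G (nth0 ys 0) (nth0 ys 1)) \<and> primrec_fn (\<lambda>ys. L (nth0 ys 0))
      \<and> mono L \<and> (\<forall>k. \<exists>j. k \<le> L j) \<and> (\<forall>x j i. i < L j \<longrightarrow> F x i = G i (prefix_code x j)))"

lemma primrec_mapI:
  assumes "primrec_fn (\<lambda>ys. G (nth0 ys 0) (nth0 ys 1))" "primrec_fn (\<lambda>ys. L (nth0 ys 0))"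
    and "mono L" "\<And>k. \<exists>j. k \<le> L j" "\<And>x j i. i < L j \<Longrightarrow> F x i = G i (prefix_code x j)"
  shows "primrec_map F"
  unfolding primrec_map_def using assms by blast

lemma primrec_mapE:
  assumes "primrec_map F"
  obtains G L where "primrec_fn (\<lambda>ys. G (nth0 ys 0) (nth0 ys 1))" "primrec_fn (\<lambda>ys. L (nth0 ys 0))"
    and "mono L" "\<And>k. \<exists>j. k \<le> L j" "\<And>x j i. i < L j \<Longrightarrow> F x i = G i (prefix_code x j)"
  using assms unfolding primrec_map_def by blast

lemma Sigma01_vimage:
  assumes A: "Sigma01 A" and F: "primrec_map F"
  shows "Sigma01 (F -` A)"
proof -
  obtain f where f: "primrec_fn f" and A_eq: "A = {w. \<exists>k. f [prefix_code w k] \<noteq> 0}"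
    using A by (rule Sigma01E)
  obtain G L where G: "primrec_fn (\<lambda>ys. G (nth0 ys 0) (nth0 ys 1))" and L: "primrec_fn (\<lambda>ys. L (nth0 ys 0))"
    and unbounded: "\<And>k. \<exists>j. k \<le> L j" and FG: "\<And>x j i. i < L j \<Longrightarrow> F x i = G i (prefix_code x j)"
    using F by (rule primrec_mapE) blast
  have prefix_F: "list_encode (map (\<lambda>t. G t (prefix_code x j)) [0..<i]) = prefix_code (F x) i"
    if "i \<le> L j" for x i j
  proof -
    have "map (\<lambda>t. G t (prefix_code x j)) [0..<i] = map (F x) [0..<i]"
      using FG[of _ j x] that by (auto dest: less_le_trans)
    then show ?thesis
      by (simp only:)
  qed
  define Q where "Q c = (\<exists>i<Suc (L (code_length c)). f [list_encode (map (\<lambda>t. G t c) [0..<i])] \<noteq> 0)" for c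
  have "primrec_pred (\<lambda>ys. Q (nth0 ys 0))"
    unfolding Q_def
    by (intro primrec_pred_bex primrec_fn_Suc primrec_fn_comp1[OF L] primrec_fn_code_length primrec_fn.proj
        primrec_pred_not primrec_pred_eq primrec_fn_app_singleton[OF f] primrec_fn_list_encode_map
        primrec_fn_const | simp only: nth0_tl | rule primrec_fn_comp2[OF G])+
  moreover have "F -` A = {x. \<exists>j. Q (prefix_code x j)}"
  proof (intro set_eqI iffI)
    fix x
    assume "x \<in> F -` A"
    then obtain k where k: "f [prefix_code (F x) k] \<noteq> 0"
      using A_eq by auto
    obtain j where "k \<le> L j"
      using unbounded by blast
    then have "Q (prefix_code x j)"
      unfolding Q_def using k prefix_F[of k j x] by (intro exI[of _ k]) simp
    then show "x \<in> {x. \<exists>j. Q (prefix_code x j)}"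
      by blast
  next
    fix x
    assume "x \<in> {x. \<exists>j. Q (prefix_code x j)}"
    then obtain j i where "i \<le> L j" and "f [list_encode (map (\<lambda>t. G t (prefix_code x j)) [0..<i])] \<noteq> 0"
      unfolding Q_def by (auto simp: less_Suc_eq_le)
    then have "f [prefix_code (F x) i] \<noteq> 0"
      using prefix_F by metis
    then show "x \<in> F -` A"
      using A_eq by auto
  qed
  ultimately show ?thesis
    by (rule Sigma01I)
qed

lemma primrec_map_id: "primrec_map (\<lambda>x. x)"
  by (rule primrec_mapI[of code_nth "\<lambda>j. j"])
    (auto intro: primrec_fn_code_nth primrec_fn.proj simp: code_nth_prefix_code mono_def)

lemma primrec_map_btl: "primrec_map btl"
proof (rule primrec_mapI[of "\<lambda>i c. code_nth (Suc i) c" "\<lambda>j. j - 1"])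
  show "primrec_fn (\<lambda>ys. code_nth (Suc (nth0 ys 0)) (nth0 ys 1))"
    by (intro primrec_fn_code_nth primrec_fn_Suc primrec_fn.proj)
  show "primrec_fn (\<lambda>ys. nth0 ys 0 - 1)"
    by (intro primrec_fn_pred primrec_fn.proj)
  show "\<exists>j. k \<le> j - 1" for k :: nat
    by (rule exI[of _ "Suc k"]) simp
  show "btl x i = code_nth (Suc i) (prefix_code x j)" if "i < j - 1" for x j i
    using that by (simp add: code_nth_prefix_code btl_def)
qed (auto simp: mono_def)

lemma primrec_map_bfst: "primrec_map bfst"
proof (rule primrec_mapI[of "\<lambda>i c. code_nth (2 * i) c" "\<lambda>j. j div 2"])
  show "primrec_fn (\<lambda>ys. code_nth (2 * nth0 ys 0) (nth0 ys 1))"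
    by (intro primrec_fn_code_nth primrec_fn_mult primrec_fn_const primrec_fn.proj)
  show "primrec_fn (\<lambda>ys. nth0 ys 0 div 2)"
    by (intro primrec_fn_div2 primrec_fn.proj)
  show "\<exists>j. k \<le> j div 2" for k :: nat
    by (rule exI[of _ "2 * k"]) simp
  show "bfst x i = code_nth (2 * i) (prefix_code x j)" if "i < j div 2" for x j i
    using that by (subst code_nth_prefix_code) (auto simp: bfst_def)
qed (auto simp: mono_def div_le_mono)

lemma primrec_map_bsnd: "primrec_map bsnd"
proof (rule primrec_mapI[of "\<lambda>i c. code_nth (Suc (2 * i)) c" "\<lambda>j. j div 2"])
  show "primrec_fn (\<lambda>ys. code_nth (Suc (2 * nth0 ys 0)) (nth0 ys 1))"
    by (intro primrec_fn_code_nth primrec_fn_Suc primrec_fn_mult primrec_fn_const primrec_fn.proj)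
  show "primrec_fn (\<lambda>ys. nth0 ys 0 div 2)"
    by (intro primrec_fn_div2 primrec_fn.proj)
  show "\<exists>j. k \<le> j div 2" for k :: nat
    by (rule exI[of _ "2 * k"]) simp
  show "bsnd x i = code_nth (Suc (2 * i)) (prefix_code x j)" if "i < j div 2" for x j i
    using that by (subst code_nth_prefix_code) (auto simp: bsnd_def)
qed (auto simp: mono_def div_le_mono)

lemma primrec_map_comp:
  assumes "primrec_map F1" "primrec_map F2"
  shows "primrec_map (\<lambda>x. F1 (F2 x))"
proof -
  obtain G1 L1 where G1: "primrec_fn (\<lambda>ys. G1 (nth0 ys 0) (nth0 ys 1))" and L1: "primrec_fn (\<lambda>ys. L1 (nth0 ys 0))"
    and m1: "mono L1" and u1: "\<And>k. \<exists>j. k \<le> L1 j" and F1: "\<And>x j i. i < L1 j \<Longrightarrow> F1 x i = G1 i (prefix_code x j)"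
    using assms(1) by (rule primrec_mapE) blast
  obtain G2 L2 where G2: "primrec_fn (\<lambda>ys. G2 (nth0 ys 0) (nth0 ys 1))" and L2: "primrec_fn (\<lambda>ys. L2 (nth0 ys 0))"
    and m2: "mono L2" and u2: "\<And>k. \<exists>j. k \<le> L2 j" and F2: "\<And>x j i. i < L2 j \<Longrightarrow> F2 x i = G2 i (prefix_code x j)"
    using assms(2) by (rule primrec_mapE) blast
  show ?thesis
  proof (rule primrec_mapI[of "\<lambda>i c. G1 i (list_encode (map (\<lambda>t. G2 t c) [0..<L2 (code_length c)]))" "\<lambda>j. L1 (L2 j)"])
    have "primrec_fn (\<lambda>ys. list_encode (map (\<lambda>t. G2 t (nth0 ys 1)) [0..<L2 (code_length (nth0 ys 1))]))"
      by (rule primrec_fn_list_encode_map[OF primrec_fn_comp1[OF L2 primrec_fn_code_length[OF primrec_fn.proj]]])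
        (simp only: nth0_tl, rule primrec_fn_comp2[OF G2 primrec_fn.proj primrec_fn.proj])
    then show "primrec_fn (\<lambda>ys. G1 (nth0 ys 0) (list_encode (map (\<lambda>t. G2 t (nth0 ys 1)) [0..<L2 (code_length (nth0 ys 1))])))"
      by (rule primrec_fn_comp2[OF G1 primrec_fn.proj])
    show "primrec_fn (\<lambda>ys. L1 (L2 (nth0 ys 0)))"
      by (rule primrec_fn_comp1[OF L1 L2])
    show "mono (\<lambda>j. L1 (L2 j))"
      using m1 m2 by (auto simp: mono_def)
    show "\<exists>j. k \<le> L1 (L2 j)" for k
    proof -
      obtain j1 j2 where "k \<le> L1 j1" "j1 \<le> L2 j2"
        using u1 u2 by blast
      then show ?thesis
        using m1 by (intro exI[of _ j2]) (auto simp: mono_def intro: le_trans)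
    qed
    show "F1 (F2 x) i = G1 i (list_encode (map (\<lambda>t. G2 t (prefix_code x j)) [0..<L2 (code_length (prefix_code x j))]))"
      if "i < L1 (L2 j)" for x j i
    proof -
      have "map (\<lambda>t. G2 t (prefix_code x j)) [0..<L2 j] = map (F2 x) [0..<L2 j]"
        using F2 by auto
      then have "list_encode (map (\<lambda>t. G2 t (prefix_code x j)) [0..<L2 (code_length (prefix_code x j))]) =
          prefix_code (F2 x) (L2 j)"
        by (simp only: code_length_prefix_code)
      then show ?thesis
        using F1[OF that, of "F2 x"] by simp
    qed
  qed
qed

lemma primrec_map_bpair:
  assumes "primrec_map F1" "primrec_map F2"
  shows "primrec_map (\<lambda>x. bpair (F1 x) (F2 x))"
proof -
  obtain G1 L1 where G1: "primrec_fn (\<lambda>ys. G1 (nth0 ys 0) (nth0 ys 1))" and L1: "primrec_fn (\<lambda>ys. L1 (nth0 ys 0))"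
    and m1: "mono L1" and u1: "\<And>k. \<exists>j. k \<le> L1 j" and F1: "\<And>x j i. i < L1 j \<Longrightarrow> F1 x i = G1 i (prefix_code x j)"
    using assms(1) by (rule primrec_mapE) blast
  obtain G2 L2 where G2: "primrec_fn (\<lambda>ys. G2 (nth0 ys 0) (nth0 ys 1))" and L2: "primrec_fn (\<lambda>ys. L2 (nth0 ys 0))"
    and m2: "mono L2" and u2: "\<And>k. \<exists>j. k \<le> L2 j" and F2: "\<And>x j i. i < L2 j \<Longrightarrow> F2 x i = G2 i (prefix_code x j)"
    using assms(2) by (rule primrec_mapE) blast
  show ?thesis
  proof (rule primrec_mapI[of "\<lambda>i c. if even i then G1 (i div 2) c else G2 (i div 2) c" "\<lambda>j. 2 * min (L1 j) (L2 j)"])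
    show "primrec_fn (\<lambda>ys. if even (nth0 ys 0) then G1 (nth0 ys 0 div 2) (nth0 ys 1) else G2 (nth0 ys 0 div 2) (nth0 ys 1))"
      by (intro primrec_fn_if primrec_pred_even primrec_fn.proj primrec_fn_comp2[OF G1] primrec_fn_comp2[OF G2]
          primrec_fn_div2)
    show "primrec_fn (\<lambda>ys. 2 * min (L1 (nth0 ys 0)) (L2 (nth0 ys 0)))"
      by (intro primrec_fn_mult primrec_fn_const primrec_fn_min L1 L2)
    show "mono (\<lambda>j. 2 * min (L1 j) (L2 j))"
      using m1 m2 unfolding mono_def by (meson min.mono mult_le_mono2)
    show "\<exists>j. k \<le> 2 * min (L1 j) (L2 j)" for k
    proof -
      obtain j1 j2 where "k \<le> L1 j1" "k \<le> L2 j2"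
        using u1 u2 by blast
      moreover have "L1 j1 \<le> L1 (max j1 j2)" "L2 j2 \<le> L2 (max j1 j2)"
        using m1 m2 by (auto simp: mono_def)
      ultimately show ?thesis
        by (intro exI[of _ "max j1 j2"]) simp
    qed
    show "bpair (F1 x) (F2 x) i = (if even i then G1 (i div 2) (prefix_code x j) else G2 (i div 2) (prefix_code x j))"
      if "i < 2 * min (L1 j) (L2 j)" for x j i
      using that F1[of "i div 2" j] F2[of "i div 2" j] by (simp add: bpair_def)
  qed
qed

lemma primrec_map_ncons:
  assumes \<phi>: "primrec_fn (\<lambda>ys. \<phi> (nth0 ys 0))" and F: "primrec_map F"
  shows "primrec_map (\<lambda>x. ncons (\<phi> (x 0)) (F x))"
proof -
  obtain G L where G: "primrec_fn (\<lambda>ys. G (nth0 ys 0) (nth0 ys 1))" and L: "primrec_fn (\<lambda>ys. L (nth0 ys 0))"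
    and m: "mono L" and u: "\<And>k. \<exists>j. k \<le> L j" and FG: "\<And>x j i. i < L j \<Longrightarrow> F x i = G i (prefix_code x j)"
    using F by (rule primrec_mapE) blast
  show ?thesis
  proof (rule primrec_mapI[of "\<lambda>i c. if i = 0 then \<phi> (code_nth 0 c) else G (i - 1) c"
        "\<lambda>j. if j = 0 then 0 else Suc (L j)"])
    show "primrec_fn (\<lambda>ys. if nth0 ys 0 = 0 then \<phi> (code_nth 0 (nth0 ys 1)) else G (nth0 ys 0 - 1) (nth0 ys 1))"
      by (intro primrec_fn_if primrec_pred_eq primrec_fn.proj primrec_fn_const primrec_fn_comp1[OF \<phi>]
          primrec_fn_code_nth primrec_fn_comp2[OF G] primrec_fn_pred)
    show "primrec_fn (\<lambda>ys. if nth0 ys 0 = 0 then 0 else Suc (L (nth0 ys 0)))"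
      by (intro primrec_fn_if primrec_pred_eq primrec_fn.proj primrec_fn_const primrec_fn_Suc L)
    show "mono (\<lambda>j. if j = 0 then 0 else Suc (L j))"
      using m by (auto simp: mono_def)
    show "\<exists>j. k \<le> (if j = 0 then 0 else Suc (L j))" for k
    proof -
      obtain j where "k \<le> L j"
        using u by blast
      moreover have "L j \<le> L (Suc j)"
        using m by (auto simp: mono_def)
      ultimately show ?thesis
        by (intro exI[of _ "Suc j"]) simp
    qed
    show "ncons (\<phi> (x 0)) (F x) i = (if i = 0 then \<phi> (code_nth 0 (prefix_code x j)) else G (i - 1) (prefix_code x j))"
      if "i < (if j = 0 then 0 else Suc (L j))" for x j i
      using that FG[of "i - 1" j x] by (cases i) (auto simp: code_nth_prefix_code split: if_splits)
  qed
qed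

lemma primrec_map_ncons_btl: "primrec_map F \<Longrightarrow> primrec_map (\<lambda>w. ncons (w 0) (F (btl w)))"
  using primrec_map_ncons[OF primrec_fn.proj[of 0], of "\<lambda>w. F (btl w)"] primrec_map_comp[OF _ primrec_map_btl]
  by simp

lemma primrec_map_decode_btl:
  "primrec_map (\<lambda>w. ncons (fst (prod_decode (w 0))) (btl w))"
  "primrec_map (\<lambda>w. ncons (snd (prod_decode (w 0))) (btl w))"
  by (rule primrec_map_ncons[OF primrec_fn_fst_prod_decode[OF primrec_fn.proj] primrec_map_btl]
      primrec_map_ncons[OF primrec_fn_snd_prod_decode[OF primrec_fn.proj] primrec_map_btl])+

section \<open>Closure properties of the lightface classes\<close>

lemma Sigma01_Un:
  assumes "Sigma01 A" "Sigma01 B"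
  shows "Sigma01 (A \<union> B)"
proof -
  obtain f1 where f1: "primrec_fn f1" "A = {x. \<exists>k. f1 [prefix_code x k] \<noteq> 0}"
    using assms(1) by (rule Sigma01E)
  obtain f2 where f2: "primrec_fn f2" "B = {x. \<exists>k. f2 [prefix_code x k] \<noteq> 0}"
    using assms(2) by (rule Sigma01E)
  show ?thesis
    unfolding Sigma01_def by (rule exI[of _ "\<lambda>ys. f1 ys + f2 ys"]) (use f1 f2 in \<open>auto intro: primrec_fn_add\<close>)
qed

lemma Sigma01_Int:
  assumes "Sigma01 A" "Sigma01 B"
  shows "Sigma01 (A \<inter> B)"
proof -
  obtain f1 where f1: "primrec_fn f1" "A = {x. \<exists>k. f1 [prefix_code x k] \<noteq> 0}"
    using assms(1) by (rule Sigma01E)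
  obtain f2 where f2: "primrec_fn f2" "B = {x. \<exists>k. f2 [prefix_code x k] \<noteq> 0}"
    using assms(2) by (rule Sigma01E)
  define Q where "Q c \<longleftrightarrow> (\<exists>i<Suc (code_length c). f1 [code_take i c] \<noteq> 0) \<and>
      (\<exists>i<Suc (code_length c). f2 [code_take i c] \<noteq> 0)" for c
  have "primrec_pred (\<lambda>ys. Q (nth0 ys 0))"
    unfolding Q_def
    by (intro primrec_pred_conj primrec_pred_bex primrec_fn_Suc primrec_fn_code_length primrec_fn.proj
        primrec_pred_not primrec_pred_eq primrec_fn_app_singleton[OF f1(1)] primrec_fn_app_singleton[OF f2(1)]
        primrec_fn_code_take primrec_fn_nth0_tl primrec_fn_const)
  moreover have "A \<inter> B = {x. \<exists>k. Q (prefix_code x k)}"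
  proof (intro set_eqI iffI)
    fix x
    assume "x \<in> A \<inter> B"
    then obtain k1 k2 where "f1 [prefix_code x k1] \<noteq> 0" "f2 [prefix_code x k2] \<noteq> 0"
      using f1 f2 by auto
    then have "Q (prefix_code x (max k1 k2))"
      unfolding Q_def by (metis code_length_prefix_code code_take_prefix_code le_imp_less_Suc
          max.cobounded1 max.cobounded2 min_absorb1)
    then show "x \<in> {x. \<exists>k. Q (prefix_code x k)}"
      by blast
  next
    fix x
    assume "x \<in> {x. \<exists>k. Q (prefix_code x k)}"
    then show "x \<in> A \<inter> B"
      unfolding Q_def using f1 f2 by auto
  qed
  ultimately show ?thesis
    by (rule Sigma01I)
qed

lemma Sigma01_ex_ncons:
  assumes "Sigma01 A"
  shows "Sigma01 {x. \<exists>m. ncons m x \<in> A}"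
proof -
  obtain f where f: "primrec_fn f" "A = {x. \<exists>k. f [prefix_code x k] \<noteq> 0}"
    using assms by (rule Sigma01E)
  define Q where "Q c \<longleftrightarrow> f [0] \<noteq> 0 \<or>
      (\<exists>m<Suc c. \<exists>k<Suc (code_length c). f [Suc (prod_encode (m, code_take k c))] \<noteq> 0)" for c
  have "primrec_pred (\<lambda>ys. Q (nth0 ys 0))"
    unfolding Q_def
    by (intro primrec_pred_disj primrec_pred_bex primrec_fn_Suc primrec_fn_code_length primrec_fn.proj
        primrec_pred_not primrec_pred_eq primrec_fn_app_singleton[OF f(1)] primrec_fn_code_take
        primrec_fn_nth0_tl primrec_fn_const primrec_fn_prod_encode
      | simp only: nth0_tl)+
  moreover have "{x. \<exists>m. ncons m x \<in> A} = {x. \<exists>k. Q (prefix_code x k)}"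
  proof (intro set_eqI iffI)
    fix x
    assume "x \<in> {x. \<exists>m. ncons m x \<in> A}"
    then obtain m k where mk: "f [prefix_code (ncons m x) k] \<noteq> 0"
      using f by auto
    show "x \<in> {x. \<exists>k. Q (prefix_code x k)}"
    proof (cases k)
      case 0
      then show ?thesis
        using mk unfolding Q_def by auto
    next
      case (Suc k')
      let ?j = "max m k'"
      have "m < Suc (prefix_code x ?j)"
        using le_prefix_code[of ?j x] by simp
      moreover have "code_take k' (prefix_code x ?j) = prefix_code x k'"
        by (simp add: min_def)
      ultimately have "Q (prefix_code x ?j)"
        unfolding Q_def using mk Suc prefix_code_ncons code_length_prefix_code
        by (metis le_imp_less_Suc max.cobounded2)
      then show ?thesis
        by blast
    qed
  next
    fix x
    assume "x \<in> {x. \<exists>k. Q (prefix_code x k)}"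
    then obtain j where "Q (prefix_code x j)"
      by blast
    then consider "f [prefix_code (ncons 0 x) 0] \<noteq> 0"
      | m k where "f [prefix_code (ncons m x) (Suc (min k j))] \<noteq> 0"
      unfolding Q_def by (auto simp: prefix_code_ncons simp del: upt_Suc)
    then show "x \<in> {x. \<exists>m. ncons m x \<in> A}"
      using f by cases blast+
  qed
  ultimately show ?thesis
    by (rule Sigma01I)
qed

lemma Sigma01_ex_coordinates:
  assumes R: "primrec_pred (\<lambda>ys. R (nth0 ys 0) (nth0 ys 1) (nth0 ys 2))"
    and a: "primrec_fn (\<lambda>ys. a (nth0 ys 0))" and b: "primrec_fn (\<lambda>ys. b (nth0 ys 0))"
  shows "Sigma01 {z. \<exists>i. R i (z (a i)) (z (b i))}"
proof -
  define Q where "Q c \<longleftrightarrow> (\<exists>i<code_length c. a i < code_length c \<and> b i < code_length c \<and>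
      R i (code_nth (a i) c) (code_nth (b i) c))" for c
  have "primrec_pred (\<lambda>ys. Q (nth0 ys 0))"
    unfolding Q_def
    by (intro primrec_pred_bex primrec_fn_code_length primrec_fn.proj primrec_pred_conj primrec_pred_less
        primrec_fn_comp1[OF a] primrec_fn_comp1[OF b] primrec_pred_comp3[OF R] primrec_fn_code_nth
        primrec_fn_nth0_tl)
  moreover have "{z. \<exists>i. R i (z (a i)) (z (b i))} = {z. \<exists>j. Q (prefix_code z j)}"
  proof (intro set_eqI iffI)
    fix z
    assume "z \<in> {z. \<exists>i. R i (z (a i)) (z (b i))}"
    then obtain i where "R i (z (a i)) (z (b i))"
      by blast
    then have "Q (prefix_code z (Suc (i + a i + b i)))"
      unfolding Q_def by (intro exI[of _ i]) (simp add: code_nth_prefix_code del: upt_Suc)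
    then show "z \<in> {z. \<exists>j. Q (prefix_code z j)}"
      by blast
  next
    fix z
    assume "z \<in> {z. \<exists>j. Q (prefix_code z j)}"
    then show "z \<in> {z. \<exists>i. R i (z (a i)) (z (b i))}"
      unfolding Q_def by (auto simp: code_nth_prefix_code)
  qed
  ultimately show ?thesis
    by (rule Sigma01I)
qed

text \<open>Moving the witness length into the first coordinate makes the matrix decidable, so a
  \<open>\<Sigma>\<^sup>0\<^sub>1\<close> set is the projection of a \<open>\<Pi>\<^sup>0\<^sub>1\<close> set.\<close>

lemma Sigma01_imp_Sigma0_2:
  assumes "Sigma01 A"
  shows "Sigma0 2 A"
proof -
  obtain f where f: "primrec_fn f" "A = {x. \<exists>k. f [prefix_code x k] \<noteq> 0}"
    using assms by (rule Sigma01E)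
  define B where "B = {w. f [prefix_code (btl w) (w 0)] \<noteq> 0}"
  define Q where "Q c \<longleftrightarrow> 0 < code_length c \<and> code_nth 0 c < code_length c \<and>
      f [code_take (code_nth 0 c) (code_tl c)] = 0" for c
  have "primrec_pred (\<lambda>ys. Q (nth0 ys 0))"
    unfolding Q_def code_tl_eq
    by (intro primrec_pred_conj primrec_pred_less primrec_fn_code_length primrec_fn.proj primrec_fn_code_nth
        primrec_pred_eq primrec_fn_app_singleton[OF f(1)] primrec_fn_code_take primrec_fn_snd_prod_decode
        primrec_fn_pred primrec_fn_const)
  moreover have "- B = {x. \<exists>k. Q (prefix_code x k)}"
  proof (intro set_eqI iffI)
    fix w
    assume "w \<in> - B"
    then have "Q (prefix_code w (Suc (w 0)))"
      unfolding Q_def B_def by (simp add: code_nth_prefix_code code_tl_prefix_code min_def del: upt_Suc)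
    then show "w \<in> {x. \<exists>k. Q (prefix_code x k)}"
      by blast
  next
    fix w
    assume "w \<in> {x. \<exists>k. Q (prefix_code x k)}"
    then obtain j where Q: "Q (prefix_code w j)"
      by blast
    then obtain j' where "j = Suc j'"
      unfolding Q_def by (cases j) (auto simp: code_length_def)
    then show "w \<in> - B"
      using Q unfolding Q_def B_def
      by (auto simp: code_nth_prefix_code code_tl_prefix_code min_def less_Suc_eq_le simp del: upt_Suc)
  qed
  ultimately have "Pi0 1 B"
    by (simp add: Sigma01I)
  moreover have "A = {x. \<exists>m. ncons m x \<in> B}"
    using f(2) unfolding B_def by simp
  ultimately show ?thesis
    by (simp add: numeral_2_eq_2) blast
qed

lemma Sigma0_Suc_SucI: "Sigma0 (Suc m) (- B) \<Longrightarrow> A = {x. \<exists>k. ncons k x \<in> B} \<Longrightarrow> Sigma0 (Suc (Suc m)) A"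
  by auto

lemma Sigma0_Suc_SucE:
  assumes "Sigma0 (Suc (Suc m)) A"
  obtains B where "Sigma0 (Suc m) (- B)" "A = {x. \<exists>k. ncons k x \<in> B}"
  using assms by auto

lemma Sigma0_le_1_iff: "n \<le> 1 \<Longrightarrow> Sigma0 n A \<longleftrightarrow> Sigma01 A"
  by (cases n) auto

lemma nat_le_1_or_Suc_Suc:
  obtains "n \<le> 1" | m where "n = Suc (Suc m)"
  by (metis One_nat_def Suc_pred bot_nat_0.not_eq_extremum le_Suc_eq not_less_eq_eq)

lemma Sigma0_vimage: "Sigma0 n A \<Longrightarrow> primrec_map F \<Longrightarrow> Sigma0 n (F -` A)"
proof (induction n arbitrary: A F rule: less_induct)
  case (less n)
  show ?case
  proof (cases n rule: nat_le_1_or_Suc_Suc)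
    case 1
    then show ?thesis
      using less.prems Sigma01_vimage by (simp add: Sigma0_le_1_iff)
  next
    case (2 m)
    obtain B where B: "Sigma0 (Suc m) (- B)" and A: "A = {x. \<exists>k. ncons k x \<in> B}"
      using less.prems(1) 2 by (auto elim: Sigma0_Suc_SucE)
    define F' where "F' w = ncons (w 0) (F (btl w))" for w
    have "Sigma0 (Suc m) (F' -` (- B))"
      unfolding F'_def using less.IH[OF _ B primrec_map_ncons_btl[OF less.prems(2)]] 2 by simp
    moreover have "F -` A = {z. \<exists>k. ncons k z \<in> F' -` B}"
      unfolding A F'_def by simp
    ultimately show ?thesis
      unfolding 2 by (intro Sigma0_Suc_SucI) (auto simp: vimage_Compl)
  qed
qed

lemma Sigma0_Un_Int:
  "Sigma0 n A \<Longrightarrow> Sigma0 n B \<Longrightarrow> Sigma0 n (A \<union> B) \<and> Sigma0 n (A \<inter> B)"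
proof (induction n arbitrary: A B rule: less_induct)
  case (less n)
  show ?case
  proof (cases n rule: nat_le_1_or_Suc_Suc)
    case 1
    then show ?thesis
      using less.prems Sigma01_Un Sigma01_Int by (simp add: Sigma0_le_1_iff)
  next
    case (2 m)
    obtain B1 where B1: "Sigma0 (Suc m) (- B1)" and A: "A = {x. \<exists>k. ncons k x \<in> B1}"
      using less.prems(1) 2 by (auto elim: Sigma0_Suc_SucE)
    obtain B2 where B2: "Sigma0 (Suc m) (- B2)" and B: "B = {x. \<exists>k. ncons k x \<in> B2}"
      using less.prems(2) 2 by (auto elim: Sigma0_Suc_SucE)
    have IH: "Sigma0 (Suc m) (C \<union> D) \<and> Sigma0 (Suc m) (C \<inter> D)"
      if "Sigma0 (Suc m) C" "Sigma0 (Suc m) D" for C D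
      using less.IH[of "Suc m"] that 2 by simp
    have "Sigma0 (Suc m) (- (B1 \<union> B2))"
      using IH[OF B1 B2] by simp
    moreover have "A \<union> B = {x. \<exists>k. ncons k x \<in> B1 \<union> B2}"
      unfolding A B by auto
    ultimately have "Sigma0 n (A \<union> B)"
      unfolding 2 by (rule Sigma0_Suc_SucI)
    txt \<open>For the intersection the two witnesses are merged into one pair code.\<close>
    define P1 where "P1 w = ncons (fst (prod_decode (w 0))) (btl w)" for w
    define P2 where "P2 w = ncons (snd (prod_decode (w 0))) (btl w)" for w
    have "Sigma0 (Suc m) (P1 -` (- B1))" "Sigma0 (Suc m) (P2 -` (- B2))"
      unfolding P1_def P2_def by (intro Sigma0_vimage B1 B2 primrec_map_decode_btl)+
    then have "Sigma0 (Suc m) (- (P1 -` B1 \<inter> P2 -` B2))"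
      using IH by (simp add: vimage_Compl)
    moreover have "A \<inter> B = {x. \<exists>k. ncons k x \<in> P1 -` B1 \<inter> P2 -` B2}"
    proof (intro set_eqI iffI)
      fix x
      assume "x \<in> A \<inter> B"
      then obtain k1 k2 where "ncons k1 x \<in> B1" "ncons k2 x \<in> B2"
        unfolding A B by auto
      then have "ncons (prod_encode (k1, k2)) x \<in> P1 -` B1 \<inter> P2 -` B2"
        unfolding P1_def P2_def by simp
      then show "x \<in> {x. \<exists>k. ncons k x \<in> P1 -` B1 \<inter> P2 -` B2}"
        by blast
    qed (auto simp: A B P1_def P2_def)
    ultimately have "Sigma0 n (A \<inter> B)"
      unfolding 2 by (rule Sigma0_Suc_SucI)
    with \<open>Sigma0 n (A \<union> B)\<close> show ?thesis ..
  qed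
qed

lemma Sigma0_Un: "Sigma0 n A \<Longrightarrow> Sigma0 n B \<Longrightarrow> Sigma0 n (A \<union> B)"
  using Sigma0_Un_Int by blast

lemma Sigma0_Int: "Sigma0 n A \<Longrightarrow> Sigma0 n B \<Longrightarrow> Sigma0 n (A \<inter> B)"
  using Sigma0_Un_Int by blast

lemma Sigma0_Suc_imp_Sigma0_Suc_Suc: "Sigma0 (Suc n) A \<Longrightarrow> Sigma0 (Suc (Suc n)) A"
proof (induction n arbitrary: A)
  case 0
  then show ?case
    using Sigma01_imp_Sigma0_2 by (simp add: numeral_2_eq_2)
next
  case (Suc n)
  then obtain B where "Sigma0 (Suc n) (- B)" and "A = {x. \<exists>k. ncons k x \<in> B}"
    by (auto elim: Sigma0_Suc_SucE)
  with Suc.IH show ?case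
    by (blast intro: Sigma0_Suc_SucI)
qed

lemma Sigma01_imp_Sigma0: "Sigma01 A \<Longrightarrow> Sigma0 n A"
proof (induction n)
  case (Suc n)
  then show ?case
    by (cases n) (simp, metis Sigma0_Suc_imp_Sigma0_Suc_Suc)
qed simp

lemma Sigma0_ex_ncons: "Sigma0 n A \<Longrightarrow> Sigma0 n {x. \<exists>k. ncons k x \<in> A}"
proof (cases n rule: nat_le_1_or_Suc_Suc)
  case 1
  then show "Sigma0 n A \<Longrightarrow> ?thesis"
    using Sigma01_ex_ncons by (simp add: Sigma0_le_1_iff)
next
  case (2 m)
  assume "Sigma0 n A"
  then obtain B where B: "Sigma0 (Suc m) (- B)" and A: "A = {x. \<exists>k. ncons k x \<in> B}"
    unfolding 2 by (rule Sigma0_Suc_SucE)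
  txt \<open>The two adjacent number quantifiers are contracted into one over pair codes.\<close>
  define Q where "Q w = ncons (fst (prod_decode (w 0))) (ncons (snd (prod_decode (w 0))) (btl w))" for w
  have "Sigma0 (Suc m) (Q -` (- B))"
    unfolding Q_def
    by (rule Sigma0_vimage[OF B primrec_map_ncons[OF primrec_fn_fst_prod_decode[OF primrec_fn.proj]
          primrec_map_decode_btl(2)]])
  moreover have "{x. \<exists>k. ncons k x \<in> A} = {x. \<exists>p. ncons p x \<in> Q -` B}"
  proof (intro set_eqI iffI)
    fix x
    assume "x \<in> {x. \<exists>k. ncons k x \<in> A}"
    then obtain k l where "ncons l (ncons k x) \<in> B"
      unfolding A by auto
    then have "ncons (prod_encode (l, k)) x \<in> Q -` B"
      unfolding Q_def by simp
    then show "x \<in> {x. \<exists>p. ncons p x \<in> Q -` B}"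
      by blast
  qed (auto simp: A Q_def)
  ultimately show ?thesis
    unfolding 2 by (intro Sigma0_Suc_SucI) (auto simp: vimage_Compl)
qed

section \<open>A \<open>\<Pi>\<^sup>0\<^sub>n\<close> set that is not \<open>\<Sigma>\<^sup>0\<^sub>n\<close>\<close>

text \<open>In \<open>universal 0\<close> the parameter \<open>bfst z\<close> is an arbitrary table of values on codes, standing
  for the primitive recursive matrix of a \<open>\<Sigma>\<^sup>0\<^sub>1\<close> set. Thus \<open>universal n\<close> is itself lightface,
  but every lightface \<open>\<Sigma>\<^sup>0\<^sub>n\<^sub>+\<^sub>1\<close> set is one of its sections, which is all the diagonal argument needs.\<close>

fun universal :: "nat \<Rightarrow> baire set" where
  "universal 0 = {z. \<exists>k. bfst z (prefix_code (bsnd z) k) \<noteq> 0}"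
| "universal (Suc n) = {z. \<exists>m. bpair (bfst z) (ncons m (bsnd z)) \<notin> universal n}"

lemma Sigma01_universal_0: "Sigma01 (universal 0)"
proof -
  define b where "b c k = list_encode (map (\<lambda>t. code_nth (Suc (2 * t)) c) [0..<k])" for c k
  define Q where "Q c \<longleftrightarrow> (\<exists>k<Suc (code_length c). 2 * k \<le> code_length c \<and> 2 * b c k < code_length c \<and>
      code_nth (2 * b c k) c \<noteq> 0)" for c
  have b_primrec: "primrec_fn (\<lambda>ys. b (nth0 ys (Suc 0)) (nth0 ys 0))"
    unfolding b_def
    by (rule primrec_fn_list_encode_map[OF primrec_fn.proj])
      (simp only: nth0_tl, intro primrec_fn_code_nth primrec_fn_Suc primrec_fn_mult primrec_fn_const primrec_fn.proj)
  have "primrec_pred (\<lambda>ys. Q (nth0 ys 0))"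
    unfolding Q_def
    by (rule primrec_pred_bex, intro primrec_fn_Suc primrec_fn_code_length primrec_fn.proj)
      (simp only: nth0_tl, intro primrec_pred_conj primrec_pred_le primrec_pred_less primrec_pred_not
        primrec_pred_eq primrec_fn_mult primrec_fn_const primrec_fn.proj primrec_fn_code_length primrec_fn_code_nth
        b_primrec)
  moreover have b_prefix: "b (prefix_code z j) k = prefix_code (bsnd z) k" if "2 * k \<le> j" for z j k
  proof -
    have "map (\<lambda>t. code_nth (Suc (2 * t)) (prefix_code z j)) [0..<k] = map (bsnd z) [0..<k]"
      using that by (intro map_cong) (auto simp: code_nth_prefix_code bsnd_def simp del: upt_Suc)
    then show ?thesis
      unfolding b_def by (simp only:)
  qed
  have "universal 0 = {z. \<exists>j. Q (prefix_code z j)}"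
  proof (intro set_eqI iffI)
    fix z
    assume "z \<in> universal 0"
    then obtain k where k: "bfst z (prefix_code (bsnd z) k) \<noteq> 0"
      by auto
    let ?j = "2 * k + 2 * prefix_code (bsnd z) k + 1"
    have "Q (prefix_code z ?j)"
      unfolding Q_def using k b_prefix[of k ?j z]
      by (intro exI[of _ k]) (auto simp: code_nth_prefix_code bfst_def simp del: upt_Suc)
    then show "z \<in> {z. \<exists>j. Q (prefix_code z j)}"
      by blast
  next
    fix z
    assume "z \<in> {z. \<exists>j. Q (prefix_code z j)}"
    then obtain j k where "2 * k \<le> j" "2 * b (prefix_code z j) k < j"
      "code_nth (2 * b (prefix_code z j) k) (prefix_code z j) \<noteq> 0"
      unfolding Q_def by auto
    then show "z \<in> universal 0"
      using b_prefix by (auto simp: code_nth_prefix_code bfst_def simp del: upt_Suc)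
  qed
  ultimately show ?thesis
    using Sigma01I by blast
qed

lemma Sigma0_universal: "Sigma0 (Suc n) (universal n)"
proof (induction n)
  case 0
  then show ?case
    using Sigma01_universal_0 by simp
next
  case (Suc n)
  define R where "R w = bpair (bfst (btl w)) (ncons (w 0) (bsnd (btl w)))" for w
  have "primrec_map R"
    unfolding R_def
    by (intro primrec_map_bpair primrec_map_comp[OF primrec_map_bfst primrec_map_btl]
        primrec_map_ncons[OF primrec_fn.proj[of 0] primrec_map_comp[OF primrec_map_bsnd primrec_map_btl]])
  then have "Sigma0 (Suc n) (- (R -` (- universal n)))"
    using Sigma0_vimage[OF Suc.IH] by (simp add: vimage_Compl)
  moreover have "universal (Suc n) = {z. \<exists>m. ncons m z \<in> R -` (- universal n)}"
    unfolding R_def by simp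
  ultimately show ?case
    by (rule Sigma0_Suc_SucI)
qed

lemma Sigma0_section_of_universal: "Sigma0 (Suc n) A \<Longrightarrow> \<exists>y. A = {x. bpair y x \<in> universal n}"
proof (induction n arbitrary: A)
  case 0
  then have "Sigma01 A"
    by simp
  then obtain f where "primrec_fn f" "A = {x. \<exists>k. f [prefix_code x k] \<noteq> 0}"
    by (rule Sigma01E)
  then show ?case
    by (intro exI[of _ "\<lambda>c. f [c]"]) simp
next
  case (Suc n)
  then obtain B where B: "Sigma0 (Suc n) (- B)" and A: "A = {x. \<exists>m. ncons m x \<in> B}"
    by (auto elim: Sigma0_Suc_SucE)
  obtain y where y: "- B = {x. bpair y x \<in> universal n}"
    using Suc.IH[OF B] by blast
  have "x \<in> A \<longleftrightarrow> bpair y x \<in> universal (Suc n)" for x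
  proof -
    have "x \<in> A \<longleftrightarrow> (\<exists>m. ncons m x \<notin> - B)"
      unfolding A by simp
    also have "\<dots> \<longleftrightarrow> (\<exists>m. bpair y (ncons m x) \<notin> universal n)"
      unfolding y by simp
    finally show ?thesis
      by simp
  qed
  then show ?case
    by blast
qed

definition diagonal :: "nat \<Rightarrow> baire set" where
  "diagonal n = {x. bpair x x \<in> universal n}"

lemma Sigma0_diagonal: "Sigma0 (Suc n) (diagonal n)"
  using Sigma0_vimage[OF Sigma0_universal primrec_map_bpair[OF primrec_map_id primrec_map_id]]
  by (simp add: diagonal_def vimage_def)

lemma not_Sigma0_Compl_diagonal: "\<not> Sigma0 (Suc n) (- diagonal n)"
proof
  assume "Sigma0 (Suc n) (- diagonal n)"
  then obtain y where "- diagonal n = {x. bpair y x \<in> universal n}"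
    using Sigma0_section_of_universal by blast
  then have "y \<notin> diagonal n \<longleftrightarrow> y \<in> diagonal n"
    unfolding diagonal_def by auto
  then show False
    by simp
qed

lemma Pi0_not_Sigma0:
  assumes "n \<ge> 1"
  obtains P where "Pi0 n P" "\<not> Sigma0 n P"
proof -
  obtain m where "n = Suc m"
    using assms by (cases n) auto
  then show thesis
    using that[of "- diagonal m"] Sigma0_diagonal not_Sigma0_Compl_diagonal by simp
qed

section \<open>The equivalence relation\<close>

definition parity_rel :: "baire set \<Rightarrow> (baire \<times> baire) set" where
  "parity_rel P = {(x, y). btl x = btl y \<and> (btl x \<in> P \<or> even (x 0) = even (y 0))}"

lemma equiv_parity_rel: "equiv UNIV (parity_rel P)"
  unfolding equiv_def refl_on_def sym_def trans_def parity_rel_def by auto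

lemma parity_rel_btl: "(x, y) \<in> parity_rel P \<Longrightarrow> btl x = btl y"
  unfolding parity_rel_def by simp

lemma countable_parity_rel_class: "countable (parity_rel P `` {x})"
proof (rule countable_subset)
  show "parity_rel P `` {x} \<subseteq> range (\<lambda>m. ncons m (btl x))"
  proof
    fix y
    assume "y \<in> parity_rel P `` {x}"
    then have "y = ncons (y 0) (btl x)"
      using parity_rel_btl ncons_btl by fastforce
    then show "y \<in> range (\<lambda>m. ncons m (btl x))"
      by blast
  qed
qed simp

lemma infinite_parity_rel_class: "infinite (parity_rel P `` {x})"
proof -
  have "inj (\<lambda>k. ncons (x 0 + 2 * k) (btl x))"
    by (rule injI) (metis ncons_0 add_left_cancel mult_left_cancel zero_neq_numeral)
  then have "infinite (range (\<lambda>k. ncons (x 0 + 2 * k) (btl x)))"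
    using finite_imageD infinite_UNIV_nat by blast
  moreover have "range (\<lambda>k. ncons (x 0 + 2 * k) (btl x)) \<subseteq> parity_rel P `` {x}"
    unfolding parity_rel_def by auto
  ultimately show ?thesis
    using finite_subset by blast
qed

lemma Sigma01_btl_bfst_neq_btl_bsnd: "Sigma01 {z. btl (bfst z) \<noteq> btl (bsnd z)}"
proof -
  have "Sigma01 {z. \<exists>i. z (Suc (Suc (2 * i))) \<noteq> z (Suc (Suc (Suc (2 * i))))}"
    by (rule Sigma01_ex_coordinates[where R = "\<lambda>_ u v. u \<noteq> v"]) (intro primrec_intros)+
  moreover have "{z. btl (bfst z) \<noteq> btl (bsnd z)} = {z. \<exists>i. z (Suc (Suc (2 * i))) \<noteq> z (Suc (Suc (Suc (2 * i))))}"
    by (auto simp: fun_eq_iff btl_def bfst_def bsnd_def)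
  ultimately show ?thesis
    by simp
qed

lemma Sigma01_bfst_bsnd_parity_neq: "Sigma01 {z. even (bfst z 0) \<noteq> even (bsnd z 0)}"
proof -
  have "Sigma01 {z. \<exists>i::nat. even (z 0) \<noteq> even (z 1)}"
    by (rule Sigma01_ex_coordinates[where R = "\<lambda>_ u v. even u \<noteq> even v" and a = "\<lambda>_. 0" and b = "\<lambda>_. 1"])
      (intro primrec_pred_not primrec_pred_iff primrec_pred_even primrec_intros)+
  then show ?thesis
    by (simp add: bfst_def bsnd_def)
qed

lemma Sigma01_prod_decode_parity_neq:
  "Sigma01 {w. even (fst (prod_decode (w 0))) \<noteq> even (snd (prod_decode (w 0)))}"
proof -
  have "Sigma01 {z. \<exists>i::nat. even (fst (prod_decode (z 0))) \<noteq> even (snd (prod_decode (z 0)))}"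
    by (rule Sigma01_ex_coordinates[where R = "\<lambda>_ u v. even (fst (prod_decode u)) \<noteq> even (snd (prod_decode v))"
          and a = "\<lambda>_. 0" and b = "\<lambda>_. 0"])
      (intro primrec_pred_not primrec_pred_iff primrec_pred_even primrec_fn_fst_prod_decode
        primrec_fn_snd_prod_decode primrec_intros)+
  then show ?thesis
    by simp
qed

lemma Pi0_rel_parity_rel:
  assumes "Pi0 n P"
  shows "Pi0_rel n (parity_rel P)"
proof -
  have "- rel_code (parity_rel P) = {z. btl (bfst z) \<noteq> btl (bsnd z)} \<union>
      ((\<lambda>z. btl (bfst z)) -` (- P) \<inter> {z. even (bfst z 0) \<noteq> even (bsnd z 0)})"
    unfolding rel_code_def parity_rel_def by auto
  moreover have "Sigma0 n ((\<lambda>z. btl (bfst z)) -` (- P))"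
    using assms by (intro Sigma0_vimage primrec_map_comp[OF primrec_map_btl primrec_map_bfst]) simp
  then have "Sigma0 n ({z. btl (bfst z) \<noteq> btl (bsnd z)} \<union>
      ((\<lambda>z. btl (bfst z)) -` (- P) \<inter> {z. even (bfst z 0) \<noteq> even (bsnd z 0)}))"
    using Sigma01_imp_Sigma0[OF Sigma01_btl_bfst_neq_btl_bsnd] Sigma01_imp_Sigma0[OF Sigma01_bfst_bsnd_parity_neq]
    by (intro Sigma0_Un Sigma0_Int)
  ultimately show ?thesis
    unfolding Pi0_rel_def by simp
qed

lemma rtrancl_crosses_boundary:
  assumes "(u, v) \<in> r\<^sup>*" "u \<in> A" "v \<notin> A"
  shows "\<exists>a b. (u, a) \<in> r\<^sup>* \<and> (a, b) \<in> r \<and> a \<in> A \<and> b \<notin> A"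
  using assms by (induction rule: rtrancl_induct) auto

lemma Sigma0_if_graphable_parity_rel:
  assumes "Sigma0_graphable n (parity_rel P)"
  shows "Sigma0 n P"
proof -
  obtain G where G: "Sigma0_rel n G" and G_rtrancl: "G\<^sup>* = parity_rel P"
    using assms unfolding Sigma0_graphable_def by blast
  define unpair where
    "unpair w = bpair (ncons (fst (prod_decode (w 0))) (btl w)) (ncons (snd (prod_decode (w 0))) (btl w))" for w
  define C where
    "C = unpair -` rel_code G \<inter> {w. even (fst (prod_decode (w 0))) \<noteq> even (snd (prod_decode (w 0)))}"
  have "Sigma0 n C"
    unfolding C_def unpair_def
    by (intro Sigma0_Int Sigma01_imp_Sigma0 Sigma01_prod_decode_parity_neq
        Sigma0_vimage[OF G[unfolded Sigma0_rel_def]] primrec_map_bpair primrec_map_decode_btl)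
  txt \<open>Within the class of tail \<open>t \<in> P\<close> some edge of \<open>G\<close> must join the two parities.\<close>
  moreover have "{t. \<exists>m. ncons m t \<in> C} = P"
  proof (intro set_eqI iffI)
    fix t
    assume "t \<in> {t. \<exists>m. ncons m t \<in> C}"
    then obtain m where edge: "(ncons (fst (prod_decode m)) t, ncons (snd (prod_decode m)) t) \<in> G"
      and parity: "even (fst (prod_decode m)) \<noteq> even (snd (prod_decode m))"
      unfolding C_def unpair_def rel_code_def by auto
    have "(ncons (fst (prod_decode m)) t, ncons (snd (prod_decode m)) t) \<in> parity_rel P"
      unfolding G_rtrancl[symmetric] using edge by (rule r_into_rtrancl)
    with parity show "t \<in> P"
      unfolding parity_rel_def by auto
  next
    fix t
    assume "t \<in> P"
    then have "(ncons 0 t, ncons 1 t) \<in> G\<^sup>*"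
      unfolding G_rtrancl parity_rel_def by simp
    from rtrancl_crosses_boundary[OF this, of "{x. even (x 0)}"]
    obtain a b where a: "(ncons 0 t, a) \<in> G\<^sup>*" and ab: "(a, b) \<in> G"
      and parity: "even (a 0)" "\<not> even (b 0)"
      by auto
    have "btl a = t" "btl b = t"
      using parity_rel_btl a rtrancl_into_rtrancl[OF a ab] unfolding G_rtrancl by force+
    then have "unpair (ncons (prod_encode (a 0, b 0)) t) = bpair a b"
      unfolding unpair_def using ncons_btl[of a] ncons_btl[of b] by simp
    then have "ncons (prod_encode (a 0, b 0)) t \<in> C"
      unfolding C_def rel_code_def using ab parity by simp
    then show "t \<in> {t. \<exists>m. ncons m t \<in> C}"
      by blast
  qed
  ultimately show ?thesis
    using Sigma0_ex_ncons[of n C] by simp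
qed

theorem proposition3p2:
  fixes n :: nat
  assumes "n \<ge> 1"
  shows "\<exists>E :: (baire \<times> baire) set. equiv UNIV E \<and> Pi0_rel n E \<and>
           (\<forall>x. countable (E `` {x}) \<and> infinite (E `` {x})) \<and>
           \<not> Sigma0_graphable n E"
proof -
  obtain P where P: "Pi0 n P" and not_Sigma0_P: "\<not> Sigma0 n P"
    using Pi0_not_Sigma0[OF assms] .
  have "\<not> Sigma0_graphable n (parity_rel P)"
    using not_Sigma0_P Sigma0_if_graphable_parity_rel by blast
  then show ?thesis
    by (intro exI[of _ "parity_rel P"] conjI allI equiv_parity_rel Pi0_rel_parity_rel[OF P]
        countable_parity_rel_class infinite_parity_rel_class)
qed

end
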